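(* Let $p\in(0,1)$, $t\ge0$, and let $x,\tilde x\in\mathcal{U}_0$ with $\tilde x\preccurlyeq x$. Then $\mathbb{P}_p^{x}(X_t=O)\le\mathbb{P}_p^{\tilde x}(X_t=O)$.
   Context: The simple exclusion process on $\mathbb{Z}$ with parameter $p\in(0,1)$: each site is occupied by at most one particle; each particle attempts to jump one site to the right at rate $p$ and one site to the left at rate $1-p$, an attempt succeeding iff the target site is empty. $O$ is the configuration with every negative site occupied and every non-negative site empty; $\mathcal{U}_0$ is the set of configurations in which the number of particles in $[0,\infty)$ is finite and equal to the number of holes in $(-\infty,0)$. $\mathbb{P}_p^x$ is the law of the process started from $x$ and $X_t$ the state at time $t$. For $x,\tilde x\in\mathcal{U}_0$, $\tilde x\preccurlyeq x$ means that for every site $i$, the number of particles to the right of $i$ in $x$ is at least the number in $\tilde x$ (equivalently, for each $k$ the $k$-th rightmost particle of $\tilde x$ is no further right than the $k$-th rightmost particle of $x$). *)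

theory Defs
  imports "HOL-Analysis.Analysis"
begin

(* A configuration is the set of occupied sites of Z. *)
type_synonym config = "int set"

definition U0 :: "config set" where
  "U0 = {x. finite {i \<in> x. i \<ge> 0} \<and> finite {i. i < 0 \<and> i \<notin> x} \<and>
            card {i \<in> x. i \<ge> 0} = card {i. i < 0 \<and> i \<notin> x}}"

definition Oconf :: config where
  "Oconf = {i. i < 0}"

definition sep_preceq :: "config \<Rightarrow> config \<Rightarrow> bool" where
  "sep_preceq xt x \<longleftrightarrow> (\<forall>i::int. card {j \<in> xt. j > i} \<le> card {j \<in> x. j > i})"

definition sep_move :: "config \<Rightarrow> int \<Rightarrow> int \<Rightarrow> config" where
  "sep_move x i j = insert j (x - {i})"

definition sep_R :: "config \<Rightarrow> int set" where
  "sep_R x = {i. i \<in> x \<and> i + 1 \<notin> x}"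

definition sep_L :: "config \<Rightarrow> int set" where
  "sep_L x = {i. i \<in> x \<and> i - 1 \<notin> x}"

definition sep_rate :: "real \<Rightarrow> config \<Rightarrow> real" where
  "sep_rate p x = p * real (card (sep_R x)) + (1 - p) * real (card (sep_L x))"

(* sep_f p n t x y: probability, starting from x, of having made exactly n jumps by time t
   and being at y (backward integral recursion for continuous-time Markov chains). *)
primrec sep_f :: "real \<Rightarrow> nat \<Rightarrow> real \<Rightarrow> config \<Rightarrow> config \<Rightarrow> real" where
  "sep_f p 0 t x y = (if x = y then exp (- sep_rate p x * t) else 0)"
| "sep_f p (Suc n) t x y =
     integral {0..t} (\<lambda>s. exp (- sep_rate p x * s) *
        ((\<Sum>i\<in>sep_R x. p * sep_f p n (t - s) (sep_move x i (i + 1)) y) +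
         (\<Sum>i\<in>sep_L x. (1 - p) * sep_f p n (t - s) (sep_move x i (i - 1)) y)))"

definition sep_prob :: "real \<Rightarrow> config \<Rightarrow> real \<Rightarrow> config \<Rightarrow> real" where
  "sep_prob p x t y = (\<Sum>n. sep_f p n t x y)"

end

theory Submission
  imports Defs
begin

(*
  Its partial sums satisfy the Duhamel (integral) form of the Kolmogorov backward equation,
  are bounded by 1, and converge monotonically; hence P^x(X_t = y) itself satisfies the
  backward equation d/dt u(x) = -rate(x) u(x) + (jump part of the generator applied to u)(x).

  The comparison is proved by induction on the number N of jumps: the partial sum with N+1
  jumps started from x is below P^z(X_t = O) for every z \<preceq> x.  For the induction step we run
  a minimum principle for linear cooperative ODE systems on the finite set {z \<in> U0. z \<preceq> x}:
  jumps that x and z can make simultaneously preserve the order, a jump only x can make stays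
  above z, and a jump only z can make stays below x.
*)

lemma integral_reflect_Icc:
  "integral {0..t} (\<lambda>s. h (t - s)) = integral {0..t} (h :: real \<Rightarrow> real)"
proof -
  have "integral {0..t} (\<lambda>s. h (t - s)) = integral {-t..-0} (\<lambda>x. h (t - - x))"
    using Henstock_Kurzweil_Integration.integral_reflect_real[of t 0 "\<lambda>s. h (t - s)"] by simp
  also have "\<dots> = integral {-t..0} (h \<circ> (+) t)" by (simp add: o_def)
  also have "\<dots> = integral {0..t} h" using integral_shift_Icc_real[of "-t" 0 h t] by simp
  finally show ?thesis .
qed

lemma integral_exp_convolution:
  fixes c t :: real and g :: "real \<Rightarrow> real"
  shows "integral {0..t} (\<lambda>s. exp (- c * s) * g (t - s))
       = exp (- c * t) * integral {0..t} (\<lambda>\<sigma>. exp (c * \<sigma>) * g \<sigma>)"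
proof -
  have "integral {0..t} (\<lambda>s. exp (- c * s) * g (t - s))
      = integral {0..t} (\<lambda>\<sigma>. exp (- c * (t - \<sigma>)) * g \<sigma>)"
    using integral_reflect_Icc[of t "\<lambda>\<sigma>. exp (- c * (t - \<sigma>)) * g \<sigma>"] by simp
  also have "\<dots> = integral {0..t} (\<lambda>\<sigma>. exp (- c * t) * (exp (c * \<sigma>) * g \<sigma>))"
    by (simp add: algebra_simps flip: exp_add)
  finally show ?thesis by simp
qed

lemma integral_exp_times_const:
  fixes c t :: real assumes "0 \<le> t"
  shows "integral {0..t} (\<lambda>\<sigma>. exp (c * \<sigma>) * c) = exp (c * t) - 1"
proof -
  have "((\<lambda>\<sigma>. exp (c * \<sigma>) * c) has_integral (exp (c * t) - exp (c * 0))) {0..t}"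
    by (rule fundamental_theorem_of_calculus[OF assms])
       (auto intro!: derivative_eq_intros simp: has_real_derivative_iff_has_vector_derivative[symmetric])
  then have "((\<lambda>\<sigma>. exp (c * \<sigma>) * c) has_integral (exp (c * t) - 1)) {0..t}" by simp
  then show ?thesis by (rule integral_unique)
qed

text \<open>The Duhamel form \<open>\<phi>(t) = e^{-ct} (a + \<integral>\<^sub>0\<^sup>t e^{c\<sigma>} g(\<sigma>) d\<sigma>)\<close> of the solution of
  \<open>\<phi>' = -c \<phi> + g\<close>, \<open>\<phi>(0) = a\<close>: it is continuous and solves the equation for \<open>t > 0\<close>.\<close>
definition duhamel :: "real \<Rightarrow> real \<Rightarrow> (real \<Rightarrow> real) \<Rightarrow> real \<Rightarrow> real" where
  "duhamel c a g t = exp (- c * t) * (a + integral {0..t} (\<lambda>\<sigma>. exp (c * \<sigma>) * g \<sigma>))"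

lemma duhamel_at_0 [simp]: "duhamel c a g 0 = a"
  by (simp add: duhamel_def)

lemma duhamel_continuous_integrable:
  assumes "(\<lambda>\<sigma>. exp (c * \<sigma>) * g \<sigma>) integrable_on {0..T}"
  shows "continuous_on {0..T} (duhamel c a g)"
  unfolding duhamel_def by (intro continuous_intros indefinite_integral_continuous_1 assms)

lemma duhamel_continuous:
  assumes "continuous_on {0..T} g"
  shows "continuous_on {0..T} (duhamel c a g)"
  by (intro duhamel_continuous_integrable integrable_continuous_real continuous_intros assms)

lemma duhamel_add:
  assumes "continuous_on {0..t} g" "continuous_on {0..t} h"
  shows "duhamel c a g t + duhamel c b h t = duhamel c (a + b) (\<lambda>\<sigma>. g \<sigma> + h \<sigma>) t"
proof -
  have "integral {0..t} (\<lambda>\<sigma>. exp (c * \<sigma>) * (g \<sigma> + h \<sigma>))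
      = integral {0..t} (\<lambda>\<sigma>. exp (c * \<sigma>) * g \<sigma>) + integral {0..t} (\<lambda>\<sigma>. exp (c * \<sigma>) * h \<sigma>)"
    unfolding distrib_left
    by (intro integral_add integrable_continuous_real continuous_intros assms)
  then show ?thesis unfolding duhamel_def by (simp add: algebra_simps)
qed

lemma duhamel_nonneg:
  assumes "0 \<le> a" "continuous_on {0..t} g" "\<And>\<sigma>. \<sigma> \<in> {0..t} \<Longrightarrow> 0 \<le> g \<sigma>"
  shows "0 \<le> duhamel c a g t"
  unfolding duhamel_def
  by (intro mult_nonneg_nonneg add_nonneg_nonneg integral_nonneg integrable_continuous_real
        continuous_intros assms) auto

lemma duhamel_le_one:
  assumes "0 \<le> t" "a \<le> 1" "continuous_on {0..t} g" "\<And>\<sigma>. \<sigma> \<in> {0..t} \<Longrightarrow> g \<sigma> \<le> c"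
  shows "duhamel c a g t \<le> 1"
proof -
  have "integral {0..t} (\<lambda>\<sigma>. exp (c * \<sigma>) * g \<sigma>) \<le> integral {0..t} (\<lambda>\<sigma>. exp (c * \<sigma>) * c)"
    by (intro integral_le integrable_continuous_real continuous_intros mult_left_mono assms) auto
  also have "\<dots> = exp (c * t) - 1" by (rule integral_exp_times_const[OF assms(1)])
  finally have "duhamel c a g t \<le> exp (- c * t) * (1 + (exp (c * t) - 1))"
    unfolding duhamel_def using assms(2) by (intro mult_left_mono add_mono) auto
  also have "\<dots> = 1" by (simp flip: exp_add)
  finally show ?thesis .
qed

lemma duhamel_monotone_limit:
  fixes g :: "nat \<Rightarrow> real \<Rightarrow> real"
  assumes t: "0 \<le> t" and cont: "\<And>k. continuous_on {0..t} (g k)"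
    and inc: "\<And>k \<sigma>. \<sigma> \<in> {0..t} \<Longrightarrow> g k \<sigma> \<le> g (Suc k) \<sigma>"
    and lim: "\<And>\<sigma>. \<sigma> \<in> {0..t} \<Longrightarrow> (\<lambda>k. g k \<sigma>) \<longlonglongrightarrow> G \<sigma>"
    and bounds: "\<And>k \<sigma>. \<sigma> \<in> {0..t} \<Longrightarrow> 0 \<le> g k \<sigma> \<and> g k \<sigma> \<le> c"
  shows "(\<lambda>\<sigma>. exp (c * \<sigma>) * G \<sigma>) integrable_on {0..t}"
    and "(\<lambda>k. duhamel c a (g k) t) \<longlonglongrightarrow> duhamel c a G t"
proof -
  let ?f = "\<lambda>k \<sigma>. exp (c * \<sigma>) * g k \<sigma>"
  have int: "?f k integrable_on {0..t}" for k
    by (intro integrable_continuous_real continuous_intros cont)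
  have "\<bar>integral {0..t} (?f k)\<bar> \<le> exp (c * t) - 1" for k
  proof -
    have "0 \<le> integral {0..t} (?f k)"
      using bounds by (intro integral_nonneg int) auto
    moreover have "integral {0..t} (?f k) \<le> integral {0..t} (\<lambda>\<sigma>. exp (c * \<sigma>) * c)"
      using bounds by (intro integral_le int integrable_continuous_real continuous_intros mult_left_mono) auto
    ultimately show ?thesis using integral_exp_times_const[OF t, of c] by simp
  qed
  then have "bounded (range (\<lambda>k. integral {0..t} (?f k)))"
    unfolding bounded_real by blast
  then have mc: "(\<lambda>\<sigma>. exp (c * \<sigma>) * G \<sigma>) integrable_on {0..t} \<and>
      (\<lambda>k. integral {0..t} (?f k)) \<longlonglongrightarrow> integral {0..t} (\<lambda>\<sigma>. exp (c * \<sigma>) * G \<sigma>)"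
    using inc lim by (intro monotone_convergence_increasing int mult_left_mono tendsto_intros) auto
  then show "(\<lambda>\<sigma>. exp (c * \<sigma>) * G \<sigma>) integrable_on {0..t}" ..
  show "(\<lambda>k. duhamel c a (g k) t) \<longlonglongrightarrow> duhamel c a G t"
    unfolding duhamel_def using mc by (intro tendsto_intros) auto
qed

lemma duhamel_deriv:
  assumes g: "continuous_on {0..t + 1} g" and t: "0 < t"
  shows "(duhamel c a g has_real_derivative (- c * duhamel c a g t + g t)) (at t)"
proof -
  let ?I = "\<lambda>x. integral {0..x} (\<lambda>\<sigma>. exp (c * \<sigma>) * g \<sigma>)"
  have cont: "continuous_on {0..t + 1} (\<lambda>\<sigma>. exp (c * \<sigma>) * g \<sigma>)"
    by (intro continuous_intros g)
  have "(?I has_real_derivative exp (c * t) * g t) (at t within {0..t + 1})"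
    using integral_has_real_derivative[OF cont, of t] t by simp
  moreover have "at t within {0..t + 1} = at t"
    by (rule at_within_interior) (use t in simp)
  ultimately have I: "(?I has_real_derivative exp (c * t) * g t) (at t)" by simp
  have "(duhamel c a g has_real_derivative
          exp (- c * t) * (- c) * (a + ?I t) + exp (- c * t) * (exp (c * t) * g t)) (at t)"
    unfolding duhamel_def by (auto intro!: derivative_eq_intros I)
  moreover have "exp (- c * t) * (- c) * (a + ?I t) + exp (- c * t) * (exp (c * t) * g t)
               = - c * duhamel c a g t + g t"
    unfolding duhamel_def by (simp add: algebra_simps flip: exp_add)
  ultimately show ?thesis by simp
qed

lemma first_nonpositive_time:
  fixes \<psi> :: "'a \<Rightarrow> real \<Rightarrow> real"
  assumes fin: "finite S" and cont: "\<And>w. w \<in> S \<Longrightarrow> continuous_on {0..t} (\<psi> w)"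
    and pos0: "\<And>w. w \<in> S \<Longrightarrow> 0 < \<psi> w 0"
    and z: "z \<in> S" and t: "0 \<le> t" and zt: "\<psi> z t \<le> 0"
  obtains \<tau> w where "w \<in> S" "0 < \<tau>" "\<psi> w \<tau> \<le> 0" "\<And>v. v \<in> S \<Longrightarrow> 0 \<le> \<psi> v \<tau>"
    "\<And>s. 0 \<le> s \<Longrightarrow> s < \<tau> \<Longrightarrow> 0 < \<psi> w s"
proof -
  define Z where "Z = (\<Union>w\<in>S. {0..t} \<inter> \<psi> w -` {..0})"
  have "closed Z" unfolding Z_def
    by (intro closed_UN fin ballI continuous_closed_preimage cont) auto
  moreover have "t \<in> Z" using zt z t unfolding Z_def by auto
  moreover have bdd: "bdd_below Z" unfolding Z_def by (rule bdd_belowI[of _ 0]) auto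
  ultimately have "Inf Z \<in> Z" by (intro closed_contains_Inf) auto
  define \<tau> where "\<tau> = Inf Z"
  have first: "\<tau> \<le> s" if "s \<in> Z" for s unfolding \<tau>_def by (rule cInf_lower[OF that bdd])
  from \<open>Inf Z \<in> Z\<close> obtain w where w: "w \<in> S" "0 \<le> \<tau>" "\<tau> \<le> t" "\<psi> w \<tau> \<le> 0"
    unfolding Z_def \<tau>_def by auto
  have \<tau>: "0 < \<tau>" using pos0[OF w(1)] w by (cases "\<tau> = 0") auto
  have "0 \<le> \<psi> v \<tau>" if v: "v \<in> S" for v
  proof (rule ccontr)
    assume neg: "\<not> 0 \<le> \<psi> v \<tau>"
    have "continuous_on {0..\<tau>} (\<psi> v)" using continuous_on_subset[OF cont[OF v]] w by auto
    then obtain s where s: "0 \<le> s" "s \<le> \<tau>" "\<psi> v s = 0"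
      using IVT2'[of "\<psi> v" \<tau> 0 0] pos0[OF v] neg w by force
    then have "s \<in> Z" unfolding Z_def using v w by (auto intro!: bexI[OF _ v])
    with first s neg show False by force
  qed
  moreover have "0 < \<psi> w s" if "0 \<le> s" "s < \<tau>" for s
  proof (rule ccontr)
    assume "\<not> 0 < \<psi> w s"
    then have "s \<in> Z" unfolding Z_def using that w by (auto intro!: bexI[OF _ w(1)])
    with first that show False by force
  qed
  ultimately show thesis using that w \<tau> by blast
qed

text \<open>The transitions of \<open>z\<close> are indexed by \<open>K z\<close>.\<close>
lemma cooperative_minimum_principle:
  fixes D :: "'a \<Rightarrow> real \<Rightarrow> real"
  assumes fin: "finite S"
    and cont: "\<And>z. z \<in> S \<Longrightarrow> continuous_on {0..t} (D z)"
    and init: "\<And>z. z \<in> S \<Longrightarrow> 0 \<le> D z 0"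
    and deriv: "\<And>z s. z \<in> S \<Longrightarrow> 0 < s \<Longrightarrow> \<exists>d. (D z has_real_derivative d) (at s) \<and>
                   - c z * D z s + (\<Sum>k\<in>K z. \<rho> z k * D (nb z k) s) \<le> d"
    and K: "\<And>z. z \<in> S \<Longrightarrow> finite (K z)"
    and nb: "\<And>z k. z \<in> S \<Longrightarrow> k \<in> K z \<Longrightarrow> nb z k \<in> S"
    and \<rho>: "\<And>z k. z \<in> S \<Longrightarrow> k \<in> K z \<Longrightarrow> 0 \<le> \<rho> z k"
    and c: "\<And>z. z \<in> S \<Longrightarrow> 0 \<le> c z"
    and z: "z \<in> S" and t: "0 \<le> t"
  shows "0 \<le> D z t"
proof (rule ccontr)
  assume neg: "\<not> 0 \<le> D z t"
  text \<open>A bound for all total jump rates, and a perturbation growing at that rate.\<close>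
  define L where "L = 1 + (\<Sum>z\<in>S. \<Sum>k\<in>K z. \<rho> z k)"
  have rates: "(\<Sum>k\<in>K w. \<rho> w k) \<le> L - 1" if "w \<in> S" for w
    unfolding L_def using that by (simp, intro member_le_sum sum_nonneg fin) (auto intro: \<rho>)
  define \<epsilon> where "\<epsilon> = - D z t / (2 * exp (L * t))"
  have \<epsilon>: "0 < \<epsilon>" using neg by (simp add: \<epsilon>_def divide_neg_pos)
  define \<psi> where "\<psi> = (\<lambda>w s. D w s + \<epsilon> * exp (L * s))"
  have "\<psi> z t \<le> 0" using neg by (simp add: \<psi>_def \<epsilon>_def)
  moreover have "continuous_on {0..t} (\<psi> w)" if "w \<in> S" for w
    unfolding \<psi>_def by (intro continuous_intros cont that)
  moreover have "0 < \<psi> w 0" if "w \<in> S" for w using init[OF that] \<epsilon> by (simp add: \<psi>_def)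
  ultimately obtain \<tau> w where w: "w \<in> S" "0 < \<tau>" "\<psi> w \<tau> \<le> 0"
    and others: "\<And>v. v \<in> S \<Longrightarrow> 0 \<le> \<psi> v \<tau>" and before: "\<And>s. 0 \<le> s \<Longrightarrow> s < \<tau> \<Longrightarrow> 0 < \<psi> w s"
    using first_nonpositive_time[OF fin _ _ z t] by metis
  obtain d where d: "(D w has_real_derivative d) (at \<tau>)"
    and dge: "- c w * D w \<tau> + (\<Sum>k\<in>K w. \<rho> w k * D (nb w k) \<tau>) \<le> d"
    using deriv[OF w(1,2)] by blast
  define E where "E = \<epsilon> * exp (L * \<tau>)"
  have E: "0 < E" using \<epsilon> by (simp add: E_def)
  text \<open>At the first zero, the perturbed derivative is positive.\<close>
  have "(\<Sum>k\<in>K w. \<rho> w k) * (- E) \<le> (\<Sum>k\<in>K w. \<rho> w k * D (nb w k) \<tau>)"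
    unfolding sum_distrib_right
    using others[OF nb[OF w(1)]] \<rho>[OF w(1)] by (intro sum_mono mult_left_mono) (force simp: \<psi>_def E_def)+
  moreover have "(\<Sum>k\<in>K w. \<rho> w k) * E \<le> (L - 1) * E"
    using rates[OF w(1)] E by (intro mult_right_mono) auto
  moreover have "0 \<le> - c w * D w \<tau>"
    using c[OF w(1)] w(3) E by (simp add: \<psi>_def E_def mult_nonneg_nonpos)
  ultimately have "0 < d + L * E" using dge E by (simp add: algebra_simps)
  moreover have "(\<psi> w has_real_derivative d + L * E) (at \<tau>)"
    unfolding \<psi>_def E_def by (auto intro!: derivative_eq_intros d)
  ultimately obtain \<delta> where "0 < \<delta>" and dec: "\<And>h. 0 < h \<Longrightarrow> h < \<delta> \<Longrightarrow> \<psi> w (\<tau> - h) < \<psi> w \<tau>"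
    using DERIV_pos_inc_left by blast
  define h where "h = min (\<delta> / 2) \<tau>"
  have "0 < h" "h < \<delta>" "h \<le> \<tau>" using \<open>0 < \<delta>\<close> w(2) by (auto simp: h_def)
  then show False using dec before[of "\<tau> - h"] w(3) by force
qed

text \<open>Jump part of the generator of the exclusion process: the rate-weighted sum of \<open>\<phi>\<close> over the
  configurations reachable from \<open>x\<close> by one jump.\<close>
definition sep_jump :: "real \<Rightarrow> (config \<Rightarrow> real) \<Rightarrow> config \<Rightarrow> real" where
  "sep_jump p \<phi> x = (\<Sum>i\<in>sep_R x. p * \<phi> (sep_move x i (i + 1))) +
                    (\<Sum>i\<in>sep_L x. (1 - p) * \<phi> (sep_move x i (i - 1)))"

lemma sep_jump_add: "sep_jump p (\<lambda>w. \<phi> w + \<psi> w) x = sep_jump p \<phi> x + sep_jump p \<psi> x"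
  unfolding sep_jump_def by (simp add: distrib_left sum.distrib)

lemma sep_jump_continuous:
  assumes "\<And>w. continuous_on S (\<lambda>t. \<phi> t w)"
  shows "continuous_on S (\<lambda>t. sep_jump p (\<phi> t) x)"
  unfolding sep_jump_def by (intro continuous_intros assms)

lemma sep_jump_tendsto:
  assumes "\<And>w. (\<lambda>k. \<phi> k w) \<longlonglongrightarrow> \<psi> w"
  shows "(\<lambda>k. sep_jump p (\<phi> k) x) \<longlonglongrightarrow> sep_jump p \<psi> x"
  unfolding sep_jump_def by (intro tendsto_intros assms)

lemma sep_f_Suc_duhamel:
  "sep_f p (Suc n) t x y = duhamel (sep_rate p x) 0 (\<lambda>\<sigma>. sep_jump p (\<lambda>w. sep_f p n \<sigma> w y) x) t"
proof -
  have "sep_f p (Suc n) t x y = integral {0..t} (\<lambda>s. exp (- sep_rate p x * s) *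
          sep_jump p (\<lambda>w. sep_f p n (t - s) w y) x)"
    by (simp add: sep_jump_def)
  also have "\<dots> = exp (- sep_rate p x * t) *
      integral {0..t} (\<lambda>\<sigma>. exp (sep_rate p x * \<sigma>) * sep_jump p (\<lambda>w. sep_f p n \<sigma> w y) x)"
    by (rule integral_exp_convolution)
  finally show ?thesis by (simp add: duhamel_def)
qed

lemma sep_f_continuous: "continuous_on {0..T} (\<lambda>t. sep_f p n t x y)"
proof (induction n arbitrary: x T)
  case 0
  then show ?case by (cases "x = y") (auto intro!: continuous_intros)
next
  case (Suc n)
  then show ?case
    unfolding sep_f_Suc_duhamel by (intro duhamel_continuous sep_jump_continuous Suc.IH)
qed

definition sep_partial :: "real \<Rightarrow> nat \<Rightarrow> real \<Rightarrow> config \<Rightarrow> config \<Rightarrow> real" where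
  "sep_partial p N t x y = (\<Sum>n<N. sep_f p n t x y)"

lemma sep_partial_continuous: "continuous_on {0..T} (\<lambda>t. sep_partial p N t x y)"
  unfolding sep_partial_def by (intro continuous_intros sep_f_continuous)

lemma sep_partial_duhamel:
  "sep_partial p (Suc N) t x y = duhamel (sep_rate p x) (if x = y then 1 else 0)
      (\<lambda>\<sigma>. sep_jump p (\<lambda>w. sep_partial p N \<sigma> w y) x) t"
proof (induction N arbitrary: t x)
  case 0
  then show ?case by (simp add: sep_partial_def sep_jump_def duhamel_def)
next
  case (Suc N)
  have "sep_partial p (Suc (Suc N)) t x y = sep_partial p (Suc N) t x y + sep_f p (Suc N) t x y"
    by (simp add: sep_partial_def)
  also have "\<dots> = duhamel (sep_rate p x) (if x = y then 1 else 0)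
      (\<lambda>\<sigma>. sep_jump p (\<lambda>w. sep_partial p N \<sigma> w y) x + sep_jump p (\<lambda>w. sep_f p N \<sigma> w y) x) t"
    unfolding Suc.IH sep_f_Suc_duhamel
    by (simp add: duhamel_add sep_jump_continuous sep_partial_continuous sep_f_continuous)
  also have "\<dots> = duhamel (sep_rate p x) (if x = y then 1 else 0)
      (\<lambda>\<sigma>. sep_jump p (\<lambda>w. sep_partial p (Suc N) \<sigma> w y) x) t"
    by (simp add: sep_partial_def sep_jump_add)
  finally show ?case .
qed

lemma sep_partial_at_0: "sep_partial p (Suc N) 0 x y = (if x = y then 1 else 0)"
  by (simp add: sep_partial_duhamel)

lemma sep_partial_deriv:
  assumes "0 < t"
  shows "((\<lambda>t. sep_partial p (Suc N) t x y) has_real_derivative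
           - sep_rate p x * sep_partial p (Suc N) t x y + sep_jump p (\<lambda>w. sep_partial p N t w y) x) (at t)"
  unfolding sep_partial_duhamel
  by (intro duhamel_deriv sep_jump_continuous sep_partial_continuous assms)

context
  fixes p :: real
  assumes p0: "0 < p" and p1: "p < 1"
begin

lemma sep_jump_mono: "(\<And>w. \<phi> w \<le> \<psi> w) \<Longrightarrow> sep_jump p \<phi> x \<le> sep_jump p \<psi> x"
  unfolding sep_jump_def using p0 p1 by (intro add_mono sum_mono mult_left_mono) auto

lemma sep_jump_nonneg: "(\<And>w. 0 \<le> \<phi> w) \<Longrightarrow> 0 \<le> sep_jump p \<phi> x"
  using sep_jump_mono[of "\<lambda>_. 0" \<phi>] by (simp add: sep_jump_def)

lemma sep_jump_le_rate: "(\<And>w. \<phi> w \<le> 1) \<Longrightarrow> sep_jump p \<phi> x \<le> sep_rate p x"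
  using sep_jump_mono[of \<phi> "\<lambda>_. 1"] by (simp add: sep_jump_def sep_rate_def mult.commute)

lemma sep_rate_nonneg: "0 \<le> sep_rate p x"
  unfolding sep_rate_def using p0 p1 by simp

lemma sep_f_nonneg: "0 \<le> t \<Longrightarrow> 0 \<le> sep_f p n t x y"
proof (induction n arbitrary: t x)
  case (Suc n)
  then show ?case unfolding sep_f_Suc_duhamel
    by (intro duhamel_nonneg sep_jump_continuous sep_f_continuous sep_jump_nonneg) auto
qed simp

lemma sep_partial_nonneg: "0 \<le> t \<Longrightarrow> 0 \<le> sep_partial p N t x y"
  unfolding sep_partial_def by (intro sum_nonneg sep_f_nonneg)

lemma sep_partial_Suc_mono: "0 \<le> t \<Longrightarrow> sep_partial p N t x y \<le> sep_partial p (Suc N) t x y"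
  unfolding sep_partial_def using sep_f_nonneg by simp

lemma sep_partial_le_1: "0 \<le> t \<Longrightarrow> sep_partial p N t x y \<le> 1"
proof (induction N arbitrary: t x)
  case (Suc N)
  then show ?case unfolding sep_partial_duhamel
    by (intro duhamel_le_one sep_jump_continuous sep_partial_continuous sep_jump_le_rate) auto
qed (simp add: sep_partial_def)

lemma sep_prob_summable: "0 \<le> t \<Longrightarrow> summable (\<lambda>n. sep_f p n t x y)"
  using sep_f_nonneg sep_partial_le_1
  by (intro summableI_nonneg_bounded[where x = 1]) (auto simp: sep_partial_def)

lemma sep_partial_tendsto: "0 \<le> t \<Longrightarrow> (\<lambda>N. sep_partial p N t x y) \<longlonglongrightarrow> sep_prob p x t y"
  unfolding sep_partial_def sep_prob_def by (rule summable_LIMSEQ[OF sep_prob_summable])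

lemma sep_prob_nonneg: "0 \<le> t \<Longrightarrow> 0 \<le> sep_prob p x t y"
  unfolding sep_prob_def by (intro suminf_nonneg sep_prob_summable sep_f_nonneg)

text \<open>Integral form of the backward equation for the transition probabilities, obtained from
  that of the partial sums by monotone convergence.\<close>
lemma sep_prob_duhamel:
  assumes t: "0 \<le> t"
  shows "(\<lambda>\<sigma>. exp (sep_rate p x * \<sigma>) * sep_jump p (\<lambda>w. sep_prob p w \<sigma> y) x) integrable_on {0..t}"
    and "sep_prob p x t y = duhamel (sep_rate p x) (if x = y then 1 else 0)
                              (\<lambda>\<sigma>. sep_jump p (\<lambda>w. sep_prob p w \<sigma> y) x) t"
proof -
  let ?g = "\<lambda>N \<sigma>. sep_jump p (\<lambda>w. sep_partial p N \<sigma> w y) x"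
  let ?G = "\<lambda>\<sigma>. sep_jump p (\<lambda>w. sep_prob p w \<sigma> y) x"
  have cont: "continuous_on {0..t} (?g N)" for N
    by (intro sep_jump_continuous sep_partial_continuous)
  have inc: "?g N \<sigma> \<le> ?g (Suc N) \<sigma>" if "\<sigma> \<in> {0..t}" for N \<sigma>
    using that by (intro sep_jump_mono sep_partial_Suc_mono) auto
  have conv: "(\<lambda>N. ?g N \<sigma>) \<longlonglongrightarrow> ?G \<sigma>" if "\<sigma> \<in> {0..t}" for \<sigma>
    using that by (intro sep_jump_tendsto sep_partial_tendsto) auto
  have bounds: "0 \<le> ?g N \<sigma> \<and> ?g N \<sigma> \<le> sep_rate p x" if "\<sigma> \<in> {0..t}" for N \<sigma>
    using that by (auto intro!: sep_jump_nonneg sep_jump_le_rate sep_partial_nonneg sep_partial_le_1)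
  note limit = duhamel_monotone_limit[OF t cont inc conv bounds]
  have int: "(\<lambda>\<sigma>. exp (sep_rate p x * \<sigma>) * ?G \<sigma>) integrable_on {0..t}"
    by (rule limit(1))
  have lim: "(\<lambda>N. duhamel (sep_rate p x) (if x = y then 1 else 0) (?g N) t)
               \<longlonglongrightarrow> duhamel (sep_rate p x) (if x = y then 1 else 0) ?G t"
    by (rule limit(2))
  show "(\<lambda>\<sigma>. exp (sep_rate p x * \<sigma>) * ?G \<sigma>) integrable_on {0..t}" by (rule int)
  have "(\<lambda>N. sep_partial p (Suc N) t x y) \<longlonglongrightarrow> sep_prob p x t y"
    using sep_partial_tendsto[OF t] by (rule LIMSEQ_Suc)
  with lim show "sep_prob p x t y = duhamel (sep_rate p x) (if x = y then 1 else 0) ?G t"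
    unfolding sep_partial_duhamel by (metis LIMSEQ_unique)
qed

lemma sep_prob_at_0: "sep_prob p x 0 y = (if x = y then 1 else 0)"
  using sep_prob_duhamel(2)[of 0] by simp

lemma sep_prob_continuous: "continuous_on {0..T} (\<lambda>t. sep_prob p x t y)"
proof -
  have "continuous_on {0..T} (duhamel (sep_rate p x) (if x = y then 1 else 0)
          (\<lambda>\<sigma>. sep_jump p (\<lambda>w. sep_prob p w \<sigma> y) x))"
    by (cases "0 \<le> T") (auto intro: duhamel_continuous_integrable sep_prob_duhamel(1))
  then show ?thesis by (rule continuous_on_eq) (simp add: sep_prob_duhamel(2))
qed

lemma sep_prob_deriv:
  assumes t: "0 < t"
  shows "((\<lambda>t. sep_prob p x t y) has_real_derivative
           - sep_rate p x * sep_prob p x t y + sep_jump p (\<lambda>w. sep_prob p w t y) x) (at t)"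
proof -
  let ?u = "duhamel (sep_rate p x) (if x = y then 1 else 0) (\<lambda>\<sigma>. sep_jump p (\<lambda>w. sep_prob p w \<sigma> y) x)"
  have "(?u has_real_derivative - sep_rate p x * ?u t + sep_jump p (\<lambda>w. sep_prob p w t y) x) (at t)"
    by (intro duhamel_deriv sep_jump_continuous sep_prob_continuous t)
  then have "(?u has_real_derivative
                - sep_rate p x * sep_prob p x t y + sep_jump p (\<lambda>w. sep_prob p w t y) x) (at t)"
    using sep_prob_duhamel(2)[of t] t by simp
  then show ?thesis
    by (rule has_field_derivative_transform_within_open[where S = "{0<..}"])
       (use t sep_prob_duhamel(2) in auto)
qed

end

definition particles_above :: "config \<Rightarrow> int \<Rightarrow> nat" where
  "particles_above x i = card {j \<in> x. j > i}"

lemma sep_preceq_iff: "sep_preceq z x \<longleftrightarrow> (\<forall>i. particles_above z i \<le> particles_above x i)"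
  unfolding sep_preceq_def particles_above_def by simp

lemma U0D:
  assumes "x \<in> U0"
  shows "finite {i \<in> x. i \<ge> 0}" "finite {i. i < 0 \<and> i \<notin> x}"
    "card {i \<in> x. i \<ge> 0} = card {i. i < 0 \<and> i \<notin> x}"
  using assms unfolding U0_def by auto

lemma U0_finite_above: "x \<in> U0 \<Longrightarrow> finite {j \<in> x. j > i}"
  by (rule finite_subset[of _ "{i<..<0} \<union> {j \<in> x. j \<ge> 0}"]) (auto dest: U0D(1))

lemma particles_above_pred:
  assumes "x \<in> U0"
  shows "particles_above x (i - 1) = particles_above x i + (if i \<in> x then 1 else 0)"
proof -
  have "j > i - 1 \<longleftrightarrow> j = i \<or> j > i" for j by auto
  then have "{j \<in> x. j > i - 1} = (if i \<in> x then insert i {j \<in> x. j > i} else {j \<in> x. j > i})"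
    by auto
  then show ?thesis
    unfolding particles_above_def using U0_finite_above[OF assms, of i] by auto
qed

lemma U0_move:
  assumes x: "x \<in> U0" and a: "a \<in> x" and b: "b \<notin> x"
  shows "sep_move x a b \<in> U0"
proof -
  let ?P = "{i \<in> x. i \<ge> 0}" and ?H = "{i. i < 0 \<and> i \<notin> x}"
  let ?x = "sep_move x a b"
  let ?P' = "{i \<in> ?x. i \<ge> 0}" and ?H' = "{i. i < 0 \<and> i \<notin> ?x}"
  have fP: "finite ?P" and fH: "finite ?H" and cPH: "card ?P = card ?H" using U0D[OF x] by auto
  consider "a < 0" "b < 0" | "a < 0" "b \<ge> 0" | "a \<ge> 0" "b < 0" | "a \<ge> 0" "b \<ge> 0" by linarith
  then have "finite ?P' \<and> finite ?H' \<and> card ?P' = card ?H'"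
  proof cases
    case 1
    then have "?P' = ?P" "?H' = insert a (?H - {b})" "b \<in> ?H" "a \<notin> ?H - {b}"
      using a b by (auto simp: sep_move_def)
    moreover have "card ?H > 0" using \<open>b \<in> ?H\<close> fH by (auto simp: card_gt_0_iff)
    ultimately show ?thesis using fP fH cPH by (simp add: card_Diff_singleton)
  next
    case 2
    then have "?P' = insert b ?P" "?H' = insert a ?H" "b \<notin> ?P" "a \<notin> ?H"
      using a b by (auto simp: sep_move_def)
    then show ?thesis using fP fH cPH by simp
  next
    case 3
    then have "?P' = ?P - {a}" "?H' = ?H - {b}" "a \<in> ?P" "b \<in> ?H"
      using a b by (auto simp: sep_move_def)
    then show ?thesis using fP fH cPH by (simp add: card_Diff_singleton)
  next
    case 4
    then have "?P' = insert b (?P - {a})" "?H' = ?H" "a \<in> ?P" "b \<notin> ?P - {a}"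
      using a b by (auto simp: sep_move_def)
    moreover have "card ?P > 0" using \<open>a \<in> ?P\<close> fP by (auto simp: card_gt_0_iff)
    ultimately show ?thesis using fP fH cPH by (simp add: card_Diff_singleton)
  qed
  then show ?thesis unfolding U0_def by blast
qed

lemma U0_move_right: "x \<in> U0 \<Longrightarrow> i \<in> sep_R x \<Longrightarrow> sep_move x i (i + 1) \<in> U0"
  unfolding sep_R_def by (auto intro: U0_move)

lemma U0_move_left: "x \<in> U0 \<Longrightarrow> i \<in> sep_L x \<Longrightarrow> sep_move x i (i - 1) \<in> U0"
  unfolding sep_L_def by (auto intro: U0_move)

lemma finite_sep_R:
  assumes "x \<in> U0" shows "finite (sep_R x)"
proof -
  have "sep_R x \<subseteq> {i \<in> x. i \<ge> 0} \<union> (\<lambda>h. h - 1) ` {i. i < 0 \<and> i \<notin> x} \<union> {-1}"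
    unfolding sep_R_def by (force simp: image_iff)
  then show ?thesis using U0D[OF assms] by (meson finite_Un finite_imageI finite.intros finite_subset)
qed

lemma finite_sep_L:
  assumes "x \<in> U0" shows "finite (sep_L x)"
proof -
  have "sep_L x \<subseteq> {i \<in> x. i \<ge> 0} \<union> (\<lambda>h. h + 1) ` {i. i < 0 \<and> i \<notin> x}"
    unfolding sep_L_def by (force simp: image_iff)
  then show ?thesis using U0D[OF assms] by (meson finite_Un finite_imageI finite_subset)
qed

lemma particles_above_move_right:
  assumes x: "x \<in> U0" and i: "i \<in> sep_R x"
  shows "particles_above (sep_move x i (i + 1)) k = particles_above x k + (if k = i then 1 else 0)"
proof -
  have ix: "i \<in> x" "i + 1 \<notin> x" using i unfolding sep_R_def by auto
  have f: "finite {j \<in> x. j > k}" by (rule U0_finite_above[OF x])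
  consider "k = i" | "k < i" | "k > i" by linarith
  then show ?thesis
  proof cases
    case 1
    then have "{j \<in> sep_move x i (i + 1). j > k} = insert (i + 1) {j \<in> x. j > k}"
      using ix by (auto simp: sep_move_def)
    then show ?thesis unfolding particles_above_def using f 1 ix by simp
  next
    case 2
    then have "{j \<in> sep_move x i (i + 1). j > k} = insert (i + 1) ({j \<in> x. j > k} - {i})"
      using ix by (auto simp: sep_move_def)
    moreover have "card {j \<in> x. j > k} > 0" using f 2 ix by (auto simp: card_gt_0_iff)
    ultimately show ?thesis unfolding particles_above_def using f 2 ix
      by (simp add: card_Diff_singleton)
  next
    case 3
    then have "{j \<in> sep_move x i (i + 1). j > k} = {j \<in> x. j > k}"
      using ix by (auto simp: sep_move_def)
    then show ?thesis unfolding particles_above_def using 3 by simp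
  qed
qed

lemma particles_above_move_left:
  assumes x: "x \<in> U0" and i: "i \<in> sep_L x"
  shows "particles_above x k = particles_above (sep_move x i (i - 1)) k + (if k = i - 1 then 1 else 0)"
proof -
  have ix: "i \<in> x" "i - 1 \<notin> x" using i unfolding sep_L_def by auto
  have f: "finite {j \<in> x. j > k}" by (rule U0_finite_above[OF x])
  consider "k = i - 1" | "k < i - 1" | "k > i - 1" by linarith
  then show ?thesis
  proof cases
    case 1
    then have "{j \<in> x. j > k} = insert i {j \<in> sep_move x i (i - 1). j > k}"
      "i \<notin> {j \<in> sep_move x i (i - 1). j > k}"
      using ix by (auto simp: sep_move_def)
    moreover have "finite {j \<in> sep_move x i (i - 1). j > k}"
      by (rule finite_subset[OF _ f]) (use 1 in \<open>auto simp: sep_move_def\<close>)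
    ultimately show ?thesis unfolding particles_above_def using 1 by simp
  next
    case 2
    then have "{j \<in> sep_move x i (i - 1). j > k} = insert (i - 1) ({j \<in> x. j > k} - {i})"
      using ix by (auto simp: sep_move_def)
    moreover have "card {j \<in> x. j > k} > 0" using f 2 ix by (auto simp: card_gt_0_iff)
    ultimately show ?thesis unfolding particles_above_def using f 2 ix
      by (simp add: card_Diff_singleton)
  next
    case 3
    then have "{j \<in> sep_move x i (i - 1). j > k} = {j \<in> x. j > k}"
      using ix by (auto simp: sep_move_def)
    then show ?thesis unfolding particles_above_def using 3 by simp
  qed
qed

lemma preceq_tight_site:
  assumes x: "x \<in> U0" and z: "z \<in> U0" and zx: "sep_preceq z x"
    and eq: "particles_above z i = particles_above x i"
  shows "i \<in> z \<Longrightarrow> i \<in> x" and "i + 1 \<in> x \<Longrightarrow> i + 1 \<in> z"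
proof -
  have le: "particles_above z k \<le> particles_above x k" for k using zx sep_preceq_iff by blast
  show "i \<in> z \<Longrightarrow> i \<in> x"
    using le[of "i - 1"] eq particles_above_pred[OF x, of i] particles_above_pred[OF z, of i]
    by (auto split: if_splits)
  show "i + 1 \<in> x \<Longrightarrow> i + 1 \<in> z"
    using le[of "i + 1"] eq particles_above_pred[OF x, of "i + 1"] particles_above_pred[OF z, of "i + 1"]
    by (auto split: if_splits)
qed

context
  fixes x z :: config
  assumes x: "x \<in> U0" and z: "z \<in> U0" and zx: "sep_preceq z x"
begin

lemma preceq_le: "particles_above z k \<le> particles_above x k"
  using zx sep_preceq_iff by blast

lemma preceq_move_right_both:
  "i \<in> sep_R x \<Longrightarrow> i \<in> sep_R z \<Longrightarrow> sep_preceq (sep_move z i (i + 1)) (sep_move x i (i + 1))"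
  unfolding sep_preceq_iff
  using particles_above_move_right[OF x] particles_above_move_right[OF z] preceq_le by simp

lemma preceq_move_right_x:
  "i \<in> sep_R x \<Longrightarrow> sep_preceq z (sep_move x i (i + 1))"
  unfolding sep_preceq_iff using particles_above_move_right[OF x] preceq_le by (simp add: trans_le_add1)

lemma preceq_move_right_z:
  assumes iz: "i \<in> sep_R z" and ix: "i \<notin> sep_R x"
  shows "sep_preceq (sep_move z i (i + 1)) x"
proof -
  have "particles_above z i \<noteq> particles_above x i"
    using preceq_tight_site[OF x z zx] iz ix unfolding sep_R_def by auto
  then have "particles_above z i < particles_above x i" using preceq_le[of i] by simp
  then show ?thesis
    unfolding sep_preceq_iff using particles_above_move_right[OF z iz] preceq_le by auto
qed

lemma preceq_move_left_both:
  assumes "i \<in> sep_L x" "i \<in> sep_L z"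
  shows "sep_preceq (sep_move z i (i - 1)) (sep_move x i (i - 1))"
  unfolding sep_preceq_iff
proof
  fix k
  show "particles_above (sep_move z i (i - 1)) k \<le> particles_above (sep_move x i (i - 1)) k"
    using particles_above_move_left[OF x assms(1), of k] particles_above_move_left[OF z assms(2), of k]
      preceq_le[of k] by (auto split: if_splits)
qed

lemma preceq_move_left_z:
  assumes "i \<in> sep_L z"
  shows "sep_preceq (sep_move z i (i - 1)) x"
  unfolding sep_preceq_iff
proof
  fix k
  show "particles_above (sep_move z i (i - 1)) k \<le> particles_above x k"
    using particles_above_move_left[OF z assms, of k] preceq_le[of k] by (auto split: if_splits)
qed

lemma preceq_move_left_x:
  assumes ix: "i \<in> sep_L x" and iz: "i \<notin> sep_L z"
  shows "sep_preceq z (sep_move x i (i - 1))"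
proof -
  have "particles_above z (i - 1) \<noteq> particles_above x (i - 1)"
    using preceq_tight_site[OF x z zx, of "i - 1"] iz ix unfolding sep_L_def by auto
  then have lt: "particles_above z (i - 1) < particles_above x (i - 1)"
    using preceq_le[of "i - 1"] by simp
  show ?thesis
    unfolding sep_preceq_iff
  proof
    fix k
    show "particles_above z k \<le> particles_above (sep_move x i (i - 1)) k"
      using particles_above_move_left[OF x ix, of k] preceq_le[of k] lt by (cases "k = i - 1") auto
  qed
qed

end

lemma preceq_Oconf:
  assumes z: "z \<in> U0" and zO: "sep_preceq z Oconf"
  shows "z = Oconf"
proof -
  have e: "{j :: int. j < 0 \<and> -1 < j} = {}" by auto
  have "particles_above Oconf (-1) = 0" unfolding particles_above_def Oconf_def by (simp add: e)
  then have "particles_above z (-1) = 0" using zO sep_preceq_iff by (metis le_zero_eq)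
  then have P: "{i \<in> z. i \<ge> 0} = {}"
    unfolding particles_above_def using U0_finite_above[OF z, of "-1"] by auto
  then have "card {i \<in> z. i \<ge> 0} = 0" by (simp only: card.empty)
  then have "card {i. i < 0 \<and> i \<notin> z} = 0" using U0D(3)[OF z] by simp
  then have "{i. i < 0 \<and> i \<notin> z} = {}" using U0D(2)[OF z] by simp
  with P show ?thesis unfolding Oconf_def by auto
qed

lemma particles_above_negative:
  assumes w: "w \<in> U0" and a: "a < 0"
  shows "particles_above w a = card {a<..<0::int} + card {i. i < 0 \<and> i \<notin> w \<and> i \<le> a}"
proof -
  let ?P = "{i \<in> w. i \<ge> 0}" and ?H = "{i. i < 0 \<and> i \<notin> w}"
  let ?B = "{i. i < 0 \<and> i \<notin> w \<and> a < i}" and ?C = "{i. i < 0 \<and> i \<notin> w \<and> i \<le> a}"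
  have fP: "finite ?P" and fH: "finite ?H" and cPH: "card ?P = card ?H" using U0D[OF w] by auto
  have fB: "finite ?B" and fC: "finite ?C" by (rule finite_subset[OF _ fH], auto)+
  have "?H = ?B \<union> ?C" "?B \<inter> ?C = {}" by auto
  then have cH: "card ?H = card ?B + card ?C" using fB fC by (simp add: card_Un_disjoint)
  have B: "?B \<subseteq> {a<..<0}" by auto
  have "{j \<in> w. j > a} = ({a<..<0} - ?B) \<union> ?P" "({a<..<0} - ?B) \<inter> ?P = {}" using a by auto
  then have "particles_above w a = card ({a<..<0} - ?B) + card ?P"
    unfolding particles_above_def using fP by (simp add: card_Un_disjoint)
  also have "card ({a<..<0} - ?B) = card {a<..<0} - card ?B"
    by (rule card_Diff_subset[OF fB B])
  finally show ?thesis using cH cPH card_mono[OF _ B] by simp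
qed

lemma U0_bounded:
  assumes x: "x \<in> U0"
  obtains a b where "a < 0" "{..a} \<subseteq> x" "x \<subseteq> {..b}"
proof -
  let ?P = "{i \<in> x. i \<ge> 0}" and ?H = "{i. i < 0 \<and> i \<notin> x}"
  have fP: "finite ?P" and fH: "finite ?H" using U0D[OF x] by auto
  define b where "b = Max (insert 0 ?P)"
  define a where "a = Min (insert (-1) ?H) - 1"
  have "0 \<le> b" unfolding b_def using fP by (intro Max_ge) auto
  moreover have "j \<le> b" if "j \<in> x" "j \<ge> 0" for j
    unfolding b_def using that fP by (intro Max_ge) auto
  ultimately have "x \<subseteq> {..b}" by (force simp: not_le)
  have Min: "Min (insert (-1) ?H) \<le> h" if "h \<in> insert (-1) ?H" for h
    using fH that by (intro Min_le) auto
  then have "a < 0" unfolding a_def by force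
  moreover have "{..a} \<subseteq> x"
  proof
    fix j assume "j \<in> {..a}"
    then have "j \<le> a" by simp
    then show "j \<in> x" using Min[of j] \<open>a < 0\<close> unfolding a_def by force
  qed
  ultimately show thesis using that \<open>x \<subseteq> {..b}\<close> by blast
qed

lemma preceq_upper_bound:
  assumes z: "z \<in> U0" and zx: "sep_preceq z x" and xb: "x \<subseteq> {..b}"
  shows "z \<subseteq> {..b}"
proof -
  have "{j \<in> x. j > b} = {}" using xb by force
  then have "particles_above z b = 0"
    using zx sep_preceq_iff unfolding particles_above_def by (metis card.empty le_zero_eq)
  then have "{j \<in> z. j > b} = {}"
    unfolding particles_above_def using U0_finite_above[OF z, of b] by simp
  then show ?thesis by (auto simp: not_less[symmetric])
qed

lemma preceq_lower_bound:
  assumes x: "x \<in> U0" and z: "z \<in> U0" and zx: "sep_preceq z x" and a: "a < 0" "{..a} \<subseteq> x"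
  shows "{..a} \<subseteq> z"
proof -
  have "{i. i < 0 \<and> i \<notin> x \<and> i \<le> a} = {}" using a by auto
  then have "card {i. i < 0 \<and> i \<notin> x \<and> i \<le> a} = 0" by (simp only: card.empty)
  moreover have "particles_above z a \<le> particles_above x a" using zx sep_preceq_iff by blast
  ultimately have "card {i. i < 0 \<and> i \<notin> z \<and> i \<le> a} = 0"
    using particles_above_negative[OF z a(1)] particles_above_negative[OF x a(1)] by linarith
  moreover have "finite {i. i < 0 \<and> i \<notin> z \<and> i \<le> a}"
    by (rule finite_subset[OF _ U0D(2)[OF z]]) auto
  ultimately have holes: "{i. i < 0 \<and> i \<notin> z \<and> i \<le> a} = {}" by simp
  show ?thesis
  proof
    fix j assume "j \<in> {..a}"
    then have "j \<le> a" "j < 0" using a(1) by auto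
    then show "j \<in> z" using holes by blast
  qed
qed

text \<open>Consequently only finitely many configurations of \<open>U0\<close> lie below a given one; this is the
  finite state space on which the minimum principle is run.\<close>
lemma finite_lower_set:
  assumes x: "x \<in> U0"
  shows "finite {z \<in> U0. sep_preceq z x}"
proof -
  obtain a b where a: "a < 0" "{..a} \<subseteq> x" and b: "x \<subseteq> {..b}" using U0_bounded[OF x] .
  let ?S = "{z \<in> U0. sep_preceq z x}"
  have rep: "z = (z \<inter> {a<..b}) \<union> {..a}" if "z \<in> ?S" for z
    using that preceq_upper_bound[OF _ _ b, of z] preceq_lower_bound[OF x _ _ a, of z] by auto
  have "inj_on (\<lambda>z. z \<inter> {a<..b}) ?S"
    by (rule inj_onI) (metis rep)
  moreover have "(\<lambda>z. z \<inter> {a<..b}) ` ?S \<subseteq> Pow {a<..b}" by auto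
  ultimately show ?thesis
    by (meson finite_Pow_iff finite_greaterThanAtMost_int finite_imageD finite_subset)
qed

lemma coupled_jumps_bound:
  fixes Ax Az :: "int set" and fx uz :: "int \<Rightarrow> real"
  assumes fin: "finite Ax" "finite Az" and a: "0 \<le> a"
    and both: "\<And>i. i \<in> Ax \<Longrightarrow> i \<in> Az \<Longrightarrow> fx i \<le> uz i"
    and only_x: "\<And>i. i \<in> Ax \<Longrightarrow> i \<notin> Az \<Longrightarrow> fx i \<le> u0"
  shows "(\<Sum>i\<in>Az - Ax. a * (uz i - W)) - a * (card Az + card (Ax - Az)) * (u0 - W)
       \<le> ((\<Sum>i\<in>Az. a * uz i) - a * card Az * u0) - ((\<Sum>i\<in>Ax. a * fx i) - a * card Ax * W)"
proof -
  have "(\<Sum>i\<in>Ax. a * fx i) = (\<Sum>i\<in>Ax \<inter> Az. a * fx i) + (\<Sum>i\<in>Ax - Az. a * fx i)"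
    by (rule sum.Int_Diff[OF fin(1)])
  also have "\<dots> \<le> (\<Sum>i\<in>Ax \<inter> Az. a * uz i) + (\<Sum>i\<in>Ax - Az. a * u0)"
    using both only_x a by (intro add_mono sum_mono mult_left_mono) auto
  finally have x_part: "(\<Sum>i\<in>Ax. a * fx i) \<le> (\<Sum>i\<in>Ax \<inter> Az. a * uz i) + a * card (Ax - Az) * u0"
    by (simp add: algebra_simps)
  have z_part: "(\<Sum>i\<in>Az. a * uz i) = (\<Sum>i\<in>Ax \<inter> Az. a * uz i) + (\<Sum>i\<in>Az - Ax. a * uz i)"
    using sum.Int_Diff[OF fin(2), of _ Ax] by (simp add: Int_commute)
  have "card Ax = card (Ax \<inter> Az) + card (Ax - Az)" "card Az = card (Ax \<inter> Az) + card (Az - Ax)"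
    using card_Int_Diff[OF fin(1), of Az] card_Int_Diff[OF fin(2), of Ax] by (simp_all add: Int_commute)
  then show ?thesis using x_part z_part
    by (simp add: sum_subtractf sum_distrib_left algebra_simps)
qed

definition uncoupled_jumps :: "config \<Rightarrow> config \<Rightarrow> (int + int) set" where
  "uncoupled_jumps x z = Inl ` (sep_R z - sep_R x) \<union> Inr ` (sep_L z - sep_L x)"

definition jump_target :: "config \<Rightarrow> int + int \<Rightarrow> config" where
  "jump_target z k = (case k of Inl i \<Rightarrow> sep_move z i (i + 1) | Inr i \<Rightarrow> sep_move z i (i - 1))"

definition jump_rate :: "real \<Rightarrow> int + int \<Rightarrow> real" where
  "jump_rate p k = (case k of Inl i \<Rightarrow> p | Inr i \<Rightarrow> 1 - p)"

definition comparison_rate :: "real \<Rightarrow> config \<Rightarrow> config \<Rightarrow> real" where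
  "comparison_rate p x z = sep_rate p z + p * card (sep_R x - sep_R z) + (1 - p) * card (sep_L x - sep_L z)"

lemma sum_uncoupled_jumps:
  assumes "finite (sep_R z)" "finite (sep_L z)"
  shows "(\<Sum>k\<in>uncoupled_jumps x z. jump_rate p k * g (jump_target z k))
       = (\<Sum>i\<in>sep_R z - sep_R x. p * g (sep_move z i (i + 1))) +
         (\<Sum>i\<in>sep_L z - sep_L x. (1 - p) * g (sep_move z i (i - 1)))"
  unfolding uncoupled_jumps_def using assms
  by (subst sum.union_disjoint) (auto simp: sum.reindex jump_rate_def jump_target_def)

context
  fixes p :: real
  assumes p0: "0 < p" and p1: "p < 1"
begin

lemma generator_comparison:
  assumes x: "x \<in> U0" and z: "z \<in> U0" and zx: "sep_preceq z x"
    and below: "\<And>w w'. w \<in> U0 \<Longrightarrow> w' \<in> U0 \<Longrightarrow> sep_preceq w' w \<Longrightarrow> f w \<le> u w'"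
  shows "- comparison_rate p x z * (u z - W) +
           (\<Sum>k\<in>uncoupled_jumps x z. jump_rate p k * (u (jump_target z k) - W))
       \<le> (- sep_rate p z * u z + sep_jump p u z) - (- sep_rate p x * W + sep_jump p f x)"
proof -
  have right: "(\<Sum>i\<in>sep_R z - sep_R x. p * (u (sep_move z i (i + 1)) - W))
       - p * (card (sep_R z) + card (sep_R x - sep_R z)) * (u z - W)
     \<le> ((\<Sum>i\<in>sep_R z. p * u (sep_move z i (i + 1))) - p * card (sep_R z) * u z)
       - ((\<Sum>i\<in>sep_R x. p * f (sep_move x i (i + 1))) - p * card (sep_R x) * W)"
    using p0 x z U0_move_right preceq_move_right_both[OF x z zx] preceq_move_right_x[OF x z zx]
    by (intro coupled_jumps_bound finite_sep_R below) auto
  have left: "(\<Sum>i\<in>sep_L z - sep_L x. (1 - p) * (u (sep_move z i (i - 1)) - W))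
       - (1 - p) * (card (sep_L z) + card (sep_L x - sep_L z)) * (u z - W)
     \<le> ((\<Sum>i\<in>sep_L z. (1 - p) * u (sep_move z i (i - 1))) - (1 - p) * card (sep_L z) * u z)
       - ((\<Sum>i\<in>sep_L x. (1 - p) * f (sep_move x i (i - 1))) - (1 - p) * card (sep_L x) * W)"
    using p1 x z U0_move_left preceq_move_left_both[OF x z zx] preceq_move_left_x[OF x z zx]
    by (intro coupled_jumps_bound finite_sep_L below) auto
  have "(\<Sum>k\<in>uncoupled_jumps x z. jump_rate p k * (u (jump_target z k) - W))
      = (\<Sum>i\<in>sep_R z - sep_R x. p * (u (sep_move z i (i + 1)) - W)) +
        (\<Sum>i\<in>sep_L z - sep_L x. (1 - p) * (u (sep_move z i (i - 1)) - W))"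
    using sum_uncoupled_jumps[OF finite_sep_R[OF z] finite_sep_L[OF z], where x = x and p = p
        and g = "\<lambda>w. u w - W"] .
  with right left show ?thesis
    unfolding comparison_rate_def sep_rate_def sep_jump_def by (simp add: algebra_simps)
qed

text \<open>The differences \<open>P\<^sup>z(X\<^sub>t = O) - P\<^sub>N\<^sub>+\<^sub>1\<^sup>x(X\<^sub>t = O)\<close>, \<open>z \<preceq> x\<close>, satisfy a
  cooperative system of differential inequalities on the finite lower set of \<open>x\<close> and start
  nonnegative, because only \<open>O\<close> lies below \<open>O\<close>.\<close>
lemma partial_below_prob_step:
  assumes IH: "\<And>t x z. 0 \<le> t \<Longrightarrow> x \<in> U0 \<Longrightarrow> z \<in> U0 \<Longrightarrow> sep_preceq z x \<Longrightarrow>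
                 sep_partial p N t x Oconf \<le> sep_prob p z t Oconf"
    and x: "x \<in> U0" and z0: "z0 \<in> U0" "sep_preceq z0 x" and t: "0 \<le> t"
  shows "sep_partial p (Suc N) t x Oconf \<le> sep_prob p z0 t Oconf"
proof -
  define S where "S = {z \<in> U0. sep_preceq z x}"
  define D where "D = (\<lambda>z s. sep_prob p z s Oconf - sep_partial p (Suc N) s x Oconf)"
  have "0 \<le> D z0 t"
  proof (rule cooperative_minimum_principle[where D = D and S = S and z = z0 and K = "uncoupled_jumps x"
        and nb = jump_target
        and \<rho> = "\<lambda>_. jump_rate p" and c = "comparison_rate p x"])
    show "finite S" unfolding S_def by (rule finite_lower_set[OF x])
    show "continuous_on {0..t} (D z)" for z
      unfolding D_def by (intro continuous_on_diff sep_prob_continuous[OF p0 p1] sep_partial_continuous)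
    show "0 \<le> D z 0" if "z \<in> S" for z
      using that preceq_Oconf unfolding D_def S_def sep_prob_at_0[OF p0 p1] sep_partial_at_0 by auto
    show "finite (uncoupled_jumps x z)" if "z \<in> S" for z
      using that finite_sep_R finite_sep_L unfolding uncoupled_jumps_def S_def by auto
    show "jump_target z k \<in> S" if "z \<in> S" "k \<in> uncoupled_jumps x z" for z k
      using that unfolding uncoupled_jumps_def S_def jump_target_def
      by (auto intro: U0_move_right U0_move_left preceq_move_right_z[OF x] preceq_move_left_z[OF x])
    show "0 \<le> jump_rate p k" for k
      using p0 p1 unfolding jump_rate_def by (auto split: sum.splits)
    show "0 \<le> comparison_rate p x z" for z
      using p0 p1 sep_rate_nonneg[OF p0 p1, of z] unfolding comparison_rate_def by auto
    show "z0 \<in> S" using z0 unfolding S_def by auto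
    show "\<exists>d. (D z has_real_derivative d) (at s) \<and> - comparison_rate p x z * D z s +
            (\<Sum>k\<in>uncoupled_jumps x z. jump_rate p k * D (jump_target z k) s) \<le> d"
      if "z \<in> S" and s: "0 < s" for z s
    proof (intro exI conjI)
      show "(D z has_real_derivative
              (- sep_rate p z * sep_prob p z s Oconf + sep_jump p (\<lambda>w. sep_prob p w s Oconf) z)
            - (- sep_rate p x * sep_partial p (Suc N) s x Oconf
               + sep_jump p (\<lambda>w. sep_partial p N s w Oconf) x)) (at s)"
        unfolding D_def by (intro DERIV_diff sep_prob_deriv[OF p0 p1] sep_partial_deriv s)
      show "- comparison_rate p x z * D z s +
              (\<Sum>k\<in>uncoupled_jumps x z. jump_rate p k * D (jump_target z k) s)
          \<le> (- sep_rate p z * sep_prob p z s Oconf + sep_jump p (\<lambda>w. sep_prob p w s Oconf) z)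
            - (- sep_rate p x * sep_partial p (Suc N) s x Oconf
               + sep_jump p (\<lambda>w. sep_partial p N s w Oconf) x)"
        unfolding D_def using \<open>z \<in> S\<close> s
        by (intro generator_comparison x IH) (auto simp: S_def)
    qed
  qed (rule t)
  then show ?thesis unfolding D_def by simp
qed

lemma partial_below_prob:
  "0 \<le> t \<Longrightarrow> x \<in> U0 \<Longrightarrow> z \<in> U0 \<Longrightarrow> sep_preceq z x \<Longrightarrow>
     sep_partial p N t x Oconf \<le> sep_prob p z t Oconf"
proof (induction N arbitrary: t x z)
  case 0
  then show ?case using sep_prob_nonneg[OF p0 p1] by (simp add: sep_partial_def)
next
  case (Suc N)
  then show ?case using partial_below_prob_step by blast
qed

end

theorem lemma2p4:
  fixes p t :: real and x xt :: config
  assumes "0 < p" and "p < 1" and "0 \<le> t"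
    and "x \<in> U0" and "xt \<in> U0" and "sep_preceq xt x"
  shows "sep_prob p x t Oconf \<le> sep_prob p xt t Oconf"
proof (rule LIMSEQ_le_const2)
  show "(\<lambda>N. sep_partial p N t x Oconf) \<longlonglongrightarrow> sep_prob p x t Oconf"
    using sep_partial_tendsto assms(1-3) .
  show "\<exists>N0. \<forall>N\<ge>N0. sep_partial p N t x Oconf \<le> sep_prob p xt t Oconf"
    using partial_below_prob assms by blast
qed

end
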